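(* For all $x,y\in\mathbb{C}$ and all integers $n\ge0$, \[ \sum_{k=0}^n x^k\big(yL_{2k}(y)+(x(y^2+2)-2)F_{2k+2}(y)\big)=x^{n+1}(y^2+2)F_{2n+2}(y) \] and \[ \sum_{k=0}^n x^k\big(y(y^2+4)F_{2k}(y)+(x(y^2+2)-2)L_{2k+2}(y)\big)=(y^2+2)\big(x^{n+1}L_{2n+2}(y)-2\big). \]
   Context: The Fibonacci polynomials $F_n(y)$ and Lucas polynomials $L_n(y)$ are defined by $F_0(y)=0$, $F_1(y)=1$, $L_0(y)=2$, $L_1(y)=y$ and $W_n(y)=yW_{n-1}(y)+W_{n-2}(y)$ for $n\ge2$ (for $W=F$ and $W=L$). *)

theory Defs
  imports Complex_Main
begin

fun fibpoly :: "nat \<Rightarrow> complex \<Rightarrow> complex" where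
  "fibpoly 0 y = 0"
| "fibpoly (Suc 0) y = 1"
| "fibpoly (Suc (Suc n)) y = y * fibpoly (Suc n) y + fibpoly n y"

fun lucpoly :: "nat \<Rightarrow> complex \<Rightarrow> complex" where
  "lucpoly 0 y = 2"
| "lucpoly (Suc 0) y = y"
| "lucpoly (Suc (Suc n)) y = y * lucpoly (Suc n) y + lucpoly n y"

end

theory Submission
  imports Defs
begin

text \<open>Both sums telescope. With \<open>c = y\<^sup>2 + 2\<close>, the recurrences
  \<open>2 F(m+2) = y L(m) + c F(m)\<close> and \<open>2 L(m+2) = y (y\<^sup>2 + 4) F(m) + c L(m)\<close>
  turn the \<open>k\<close>-th summand into \<open>c (x\<^sup>k\<^sup>+\<^sup>1 W(2k+2) - x\<^sup>k W(2k))\<close>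
  for \<open>W = F\<close> resp. \<open>W = L\<close>, so each sum is \<open>c (x\<^sup>n\<^sup>+\<^sup>1 W(2n+2) - W(0))\<close>,
  where \<open>F(0) = 0\<close> and \<open>L(0) = 2\<close>.\<close>

lemma lucpoly_eq_fibpoly: "lucpoly n y = 2 * fibpoly (Suc n) y - y * fibpoly n y"
  by (induction n y rule: lucpoly.induct) (auto simp: algebra_simps)

lemma fibpoly_add_2:
  "2 * fibpoly (n + 2) y = y * lucpoly n y + (y\<^sup>2 + 2) * fibpoly n y"
  by (simp add: lucpoly_eq_fibpoly algebra_simps power2_eq_square)

lemma lucpoly_add_2:
  "2 * lucpoly (n + 2) y = y * (y\<^sup>2 + 4) * fibpoly n y + (y\<^sup>2 + 2) * lucpoly n y"
  by (simp add: lucpoly_eq_fibpoly algebra_simps power2_eq_square)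

lemma sum_power_mult_telescope:
  fixes W a :: "nat \<Rightarrow> 'a::comm_ring_1"
  assumes rec: "\<And>k. 2 * W (Suc k) = a k + c * W k"
  shows "(\<Sum>k=0..n. x ^ k * (a k + (x * c - 2) * W (Suc k))) = c * (x ^ (n+1) * W (n+1) - W 0)"
proof -
  have "x ^ k * (a k + (x * c - 2) * W (Suc k)) = c * (x ^ Suc k * W (Suc k) - x ^ k * W k)" for k
    using rec[of k] by (simp add: algebra_simps)
  then have "(\<Sum>k=0..n. x ^ k * (a k + (x * c - 2) * W (Suc k)))
      = c * (\<Sum>k=0..n. x ^ Suc k * W (Suc k) - x ^ k * W k)"
    by (simp add: sum_distrib_left)
  also have "\<dots> = c * (x ^ (n+1) * W (n+1) - W 0)"
    by (subst sum_Suc_diff) simp_all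
  finally show ?thesis .
qed

theorem corollary6:
  fixes x y :: complex and n :: nat
  shows "((\<Sum>k=0..n. x ^ k * (y * lucpoly (2*k) y + (x * (y^2 + 2) - 2) * fibpoly (2*k+2) y))
           = x ^ (n+1) * (y^2 + 2) * fibpoly (2*n+2) y)
       \<and> ((\<Sum>k=0..n. x ^ k * (y * (y^2 + 4) * fibpoly (2*k) y + (x * (y^2 + 2) - 2) * lucpoly (2*k+2) y))
           = (y^2 + 2) * (x ^ (n+1) * lucpoly (2*n+2) y - 2))"
proof
  show "(\<Sum>k=0..n. x ^ k * (y * lucpoly (2*k) y + (x * (y^2 + 2) - 2) * fibpoly (2*k+2) y))
      = x ^ (n+1) * (y^2 + 2) * fibpoly (2*n+2) y"
    using sum_power_mult_telescope[where W = "\<lambda>k. fibpoly (2*k) y" and a = "\<lambda>k. y * lucpoly (2*k) y"]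
      fibpoly_add_2
    by simp
  show "(\<Sum>k=0..n. x ^ k * (y * (y^2 + 4) * fibpoly (2*k) y + (x * (y^2 + 2) - 2) * lucpoly (2*k+2) y))
      = (y^2 + 2) * (x ^ (n+1) * lucpoly (2*n+2) y - 2)"
    using sum_power_mult_telescope[where W = "\<lambda>k. lucpoly (2*k) y" and a = "\<lambda>k. y * (y^2 + 4) * fibpoly (2*k) y"]
      lucpoly_add_2
    by simp
qed

end
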